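(* Let $N\ge 2$. (Complex case.) Let $R$ be an $N\times N$ complex correlation matrix (Hermitian positive definite with unit diagonal), with Cholesky factorisation $R=LL^*$, $L$ lower triangular with positive diagonal, and let $\theta_{jp}\in(0,\pi)$ ($2\le j\le N$, $1\le p\le 2j-2$) be the angles with $$l_{jk}=\left(\cos\theta_{j,2k-1}+i\cos\theta_{j,2k}\sin\theta_{j,2k-1}\right)\prod_{p=1}^{2k-2}\sin\theta_{jp}\ (1\le k\le j-1),\qquad l_{jj}=\prod_{p=1}^{2j-2}\sin\theta_{jp}.$$ For $1\le k<j\le N$, let $R_{11}$ be the leading $(k-1)\times(k-1)$ principal block of $R$, $R/R_{11}=R_{22}-R_{21}R_{11}^{-1}R_{12}$ the Schur complement (indexed by $k,\dots,N$; equal to $R$ if $k=1$), and $\rho_{jk|\{1,\dots,k-1\}}=(R/R_{11})_{jk}\big/\big((R/R_{11})_{jj}(R/R_{11})_{kk}\big)^{1/2}$. Then $$\rho_{jk|\{1,\dots,k-1\}}=\cos\theta_{j,2k-1}+i\cos\theta_{j,2k}\sin\theta_{j,2k-1}.$$ (Quaternion case.) Let $R$ be an $N\times N$ quaternion correlation matrix, i.e. a $2N\times2N$ complex Hermitian positive definite matrix composed of $2\times 2$ blocks of the form $\begin{bmatrix}z&w\\-\bar w&\bar z\end{bmatrix}$ with diagonal blocks $I_2$, with block Cholesky factorisation $R=LL^*$, $L$ block lower triangular of the same block form with diagonal blocks $l_{jj}I_2$, $l_{jj}>0$. For an off-diagonal block $l_{jk}$ with parameters $(z,w)$ write $l^{(1)}_{jk}=\mathrm{Re}\,z$,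 $l^{(2)}_{jk}=\mathrm{Im}\,z$, $l^{(3)}_{jk}=\mathrm{Re}\,w$, $l^{(4)}_{jk}=\mathrm{Im}\,w$, and let $\theta_{jp}\in(0,\pi)$ ($2\le j\le N$, $1\le p\le 4j-4$) be the angles with $$l_{jk}^{(s)}=\cos\theta_{j,4(k-1)+s}\left(\prod_{m=1}^{s-1}\sin\theta_{j,4(k-1)+m}\right)\prod_{p=1}^{4(k-1)}\sin\theta_{jp}\ (1\le k\le j-1,\,1\le s\le4),\qquad l_{jj}=\prod_{p=1}^{4(j-1)}\sin\theta_{jp}.$$ For $1\le k<j\le N$ define the $2\times2$ block $\rho_{jk|\{1,\dots,k-1\}}=(R/R_{11})_{jk}\big/\big((R/R_{11})_{jj}(R/R_{11})_{kk}\big)^{1/2}$, where $R_{11}$ is the leading $2(k-1)\times2(k-1)$ principal block, $(R/R_{11})_{jk}$ denotes the $(j,k)$ $2\times2$ block of the Schur complement $R/R_{11}$, and the diagonal blocks $(R/R_{11})_{jj}$, $(R/R_{11})_{kk}$ are positive scalar multiples of $I_2$ (identified with those scalars). Then $$\rho_{jk|\{1,\dots,k-1\}}=\begin{bmatrix}z_{jk}&w_{jk}\\-\bar w_{jk}&\bar z_{jk}\end{bmatrix},$$ with $z_{jk}=\cos\theta_{j,4k-3}+i\cos\theta_{j,4k-2}\sin\theta_{j,4k-3}$ and $w_{jk}=\left(\cos\theta_{j,4k-1}+i\cos\theta_{j,4k}\sin\theta_{j,4k-1}\right)\sin\theta_{j,4k-3}\sin\theta_{j,4k-2}$.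
   Context: Empty products equal $1$; $L^*$ denotes conjugate transpose. The angles in each row are uniquely determined since each row of real coordinates of $L$ is a unit vector with positive last coordinate $l_{jj}$. *)

theory Defs
  imports "Jordan_Normal_Form.Schur_Decomposition"
begin

text \<open>Matrices are Jordan_Normal_Form matrices with 0-based indices;
  the paper's 1-based entry (j,k) is entry (j-1,k-1).\<close>

definition hermitian_mat :: "complex mat \<Rightarrow> bool" where
  "hermitian_mat A \<longleftrightarrow> dim_row A = dim_col A \<and> mat_adjoint A = A"

definition pos_def_mat :: "complex mat \<Rightarrow> bool" where
  "pos_def_mat A \<longleftrightarrow> hermitian_mat A \<and>
     (\<forall>x :: nat \<Rightarrow> complex. (\<exists>i < dim_row A. x i \<noteq> 0) \<longrightarrow>
        (let q = (\<Sum>i<dim_row A. \<Sum>j<dim_row A. cnj (x i) * A $$ (i, j) * x j)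
         in q \<in> \<real> \<and> 0 < Re q))"

definition inv_mat :: "complex mat \<Rightarrow> complex mat" where
  "inv_mat A = (SOME B. B \<in> carrier_mat (dim_row A) (dim_row A) \<and>
       A * B = 1\<^sub>m (dim_row A) \<and> B * A = 1\<^sub>m (dim_row A))"

text \<open>Schur complement R/R11 of the leading m x m principal block R11 of an
  n x n matrix A (indexed from 0, i.e. its (i,j) entry corresponds to the
  (m+i, m+j) entry of A).  For m = 0 it equals A.\<close>
definition schur_compl :: "complex mat \<Rightarrow> nat \<Rightarrow> complex mat" where
  "schur_compl A m =
    (let n = dim_row A;
         A11 = mat m m (\<lambda>(a, b). A $$ (a, b));
         A12 = mat m (n - m) (\<lambda>(a, b). A $$ (a, m + b));
         A21 = mat (n - m) m (\<lambda>(a, b). A $$ (m + a, b));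
         A22 = mat (n - m) (n - m) (\<lambda>(a, b). A $$ (m + a, m + b))
     in A22 - A21 * inv_mat A11 * A12)"

definition quat_block_form :: "complex mat \<Rightarrow> nat \<Rightarrow> bool" where
  "quat_block_form A n \<longleftrightarrow> A \<in> carrier_mat (2 * n) (2 * n) \<and>
     (\<forall>a < n. \<forall>b < n. A $$ (2 * a + 1, 2 * b) = - cnj (A $$ (2 * a, 2 * b + 1)) \<and>
                       A $$ (2 * a + 1, 2 * b + 1) = cnj (A $$ (2 * a, 2 * b)))"

text \<open>Real coordinates l^(s)_{jk} (s = 1..4, paper's 1-based block indices j, k)
  of the block (j,k) with parameters (z,w): Re z, Im z, Re w, Im w.\<close>
definition qcoord :: "complex mat \<Rightarrow> nat \<Rightarrow> nat \<Rightarrow> nat \<Rightarrow> real" where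
  "qcoord L j k s =
     (if s = 1 then Re (L $$ (2 * (j - 1), 2 * (k - 1)))
      else if s = 2 then Im (L $$ (2 * (j - 1), 2 * (k - 1)))
      else if s = 3 then Re (L $$ (2 * (j - 1), 2 * (k - 1) + 1))
      else Im (L $$ (2 * (j - 1), 2 * (k - 1) + 1)))"

end

theory Submission
  imports Defs
begin

text \<open>If \<open>R = L L\<^sup>*\<close> with \<open>L\<close> lower triangular, the Schur complement of the leading
  \<open>m \<times> m\<close> block of \<open>R\<close> is \<open>L\<^sub>2\<^sub>2 L\<^sub>2\<^sub>2\<^sup>*\<close>, where \<open>L\<^sub>2\<^sub>2\<close> is the trailing block of \<open>L\<close>.
  Hence its first column is the corresponding column of \<open>L\<close> times the pivot, and its diagonal
  entries are the squared norms of the row tails of \<open>L\<close>, so a partial correlation is an entry of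
  \<open>L\<close> divided by the norm of the tail of its row.  In the angle parametrisation the real
  coordinates of a row of \<open>L\<close> are spherical coordinates, and the tail after the first \<open>q\<close>
  coordinates has norm \<open>sin \<theta>\<^sub>j\<^sub>1 \<cdots> sin \<theta>\<^sub>j\<^sub>q\<close>; dividing by this product gives the claimed
  expressions.  The quaternion case is the same computation on \<open>2 \<times> 2\<close> blocks.\<close>

lemma index_mat_adjoint [simp]:
  "i < dim_col A \<Longrightarrow> j < dim_row A \<Longrightarrow> mat_adjoint A $$ (i, j) = cnj (A $$ (j, i))"
  and dim_mat_adjoint [simp]:
  "dim_row (mat_adjoint A) = dim_col A" "dim_col (mat_adjoint A) = dim_row A"
  by (auto simp: mat_adjoint_def mat_of_rows_def)

lemma mat_adjoint_carrier_mat: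
  "(A :: complex mat) \<in> carrier_mat n m \<Longrightarrow> mat_adjoint A \<in> carrier_mat m n"
  unfolding carrier_mat_def by simp

lemma index_mult_mat_adjoint:
  assumes "i < dim_row A" "j < dim_row B" "dim_col A = dim_col B"
  shows "(A * mat_adjoint B) $$ (i, j) = (\<Sum>c<dim_col A. A $$ (i, c) * cnj (B $$ (j, c)))"
  using assms by (auto simp: scalar_prod_def lessThan_atLeast0 intro!: sum.cong)

lemma inv_mat_inverse:
  assumes A: "A \<in> carrier_mat n n" and det: "det A \<noteq> 0"
  shows "inv_mat A \<in> carrier_mat n n" "A * inv_mat A = 1\<^sub>m n" "inv_mat A * A = 1\<^sub>m n"
proof -
  define inverse where "inverse B \<longleftrightarrow> B \<in> carrier_mat n n \<and> A * B = 1\<^sub>m n \<and> B * A = 1\<^sub>m n" for B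
  have "\<exists>B. inverse B"
    using det_non_zero_imp_unit[OF A det, of undefined] by (auto simp: Units_def ring_mat_def inverse_def)
  moreover have "inv_mat A = (SOME B. inverse B)"
    using A unfolding inv_mat_def inverse_def by simp
  ultimately have "inverse (inv_mat A)"
    using someI_ex by metis
  then show "inv_mat A \<in> carrier_mat n n" "A * inv_mat A = 1\<^sub>m n" "inv_mat A * A = 1\<^sub>m n"
    unfolding inverse_def by blast+
qed

definition lower_triangular :: "'a :: zero mat \<Rightarrow> bool" where
  "lower_triangular A \<longleftrightarrow> (\<forall>i < dim_row A. \<forall>j < dim_col A. i < j \<longrightarrow> A $$ (i, j) = 0)"

lemma det_lower_triangular_nonzero:
  fixes A :: "complex mat"
  assumes A: "A \<in> carrier_mat n n" and lt: "lower_triangular A" and dg: "\<forall>i < n. A $$ (i, i) \<noteq> 0"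
  shows "det A \<noteq> 0" "det (mat_adjoint A) \<noteq> 0"
proof -
  have A': "mat_adjoint A \<in> carrier_mat n n" using A by (rule mat_adjoint_carrier_mat)
  have "det A = prod_list (diag_mat A)"
    using lt A by (intro det_lower_triangular[OF _ A]) (auto simp: lower_triangular_def)
  moreover have "0 \<notin> set (diag_mat A)"
    using dg A by (auto simp: diag_mat_def)
  ultimately show "det A \<noteq> 0" by (simp add: prod_list_zero_iff)
  have "upper_triangular (mat_adjoint A)"
    using lt A unfolding upper_triangular_def lower_triangular_def by auto
  then have "det (mat_adjoint A) = prod_list (diag_mat (mat_adjoint A))"
    by (rule det_upper_triangular[OF _ A'])
  moreover have "0 \<notin> set (diag_mat (mat_adjoint A))"
    using dg A by (auto simp: diag_mat_def)
  ultimately show "det (mat_adjoint A) \<noteq> 0" by (metis prod_list_zero_iff)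
qed

lemma mult_adjoint_inv_mult_adjoint_cancel:
  fixes P X Y :: "complex mat"
  assumes P: "P \<in> carrier_mat m m" and X: "X \<in> carrier_mat k m" and Y: "Y \<in> carrier_mat l m"
    and det: "det P \<noteq> 0" "det (mat_adjoint P) \<noteq> 0"
  shows "X * mat_adjoint P * inv_mat (P * mat_adjoint P) * (P * mat_adjoint Y) = X * mat_adjoint Y"
proof -
  have P': "mat_adjoint P \<in> carrier_mat m m" and Y': "mat_adjoint Y \<in> carrier_mat m l"
    using P Y by (simp_all add: mat_adjoint_carrier_mat)
  define A where "A = P * mat_adjoint P"
  define B where "B = inv_mat A"
  have A: "A \<in> carrier_mat m m" using P P' by (simp add: A_def)
  have "det A \<noteq> 0" using det det_mult[OF P P'] by (simp add: A_def)
  note B = inv_mat_inverse[OF A this, folded B_def]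
  obtain Pi where Pi: "Pi \<in> carrier_mat m m" "Pi * P = 1\<^sub>m m"
    using det_non_zero_imp_unit[OF P det(1), of undefined] by (auto simp: Units_def ring_mat_def)
  have PB: "mat_adjoint P * B \<in> carrier_mat m m" using P' B(1) by simp
  have "mat_adjoint P * B = (Pi * P) * (mat_adjoint P * B)"
    unfolding Pi(2) left_mult_one_mat[OF PB] ..
  also have "\<dots> = Pi * (A * B)"
    unfolding A_def assoc_mult_mat[OF Pi(1) P PB] assoc_mult_mat[OF P P' B(1)] ..
  finally have PBP: "mat_adjoint P * B * P = 1\<^sub>m m"
    using Pi by (simp add: B(2))
  have XPB: "X * mat_adjoint P * B \<in> carrier_mat k m" using X P' B(1) by simp
  have "X * mat_adjoint P * B * (P * mat_adjoint Y) = X * mat_adjoint P * B * P * mat_adjoint Y"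
    by (rule assoc_mult_mat[OF XPB P Y', symmetric])
  also have "X * mat_adjoint P * B * P = X * (mat_adjoint P * B * P)"
    unfolding assoc_mult_mat[OF X P' B(1)] by (rule assoc_mult_mat[OF X PB P])
  also have "X * (mat_adjoint P * B * P) * mat_adjoint Y = X * mat_adjoint Y"
    unfolding PBP using X by simp
  finally show ?thesis unfolding A_def B_def .
qed

lemma sum_lessThan_split:
  fixes f :: "nat \<Rightarrow> 'a :: comm_monoid_add"
  assumes "m \<le> n"
  shows "(\<Sum>c<n. f c) = (\<Sum>c<m. f c) + (\<Sum>c<n - m. f (m + c))"
proof -
  have "(\<Sum>c<n. f c) = (\<Sum>c<m. f c) + (\<Sum>c\<in>{m..<n}. f c)"
    using sum.atLeastLessThan_concat[of 0 m n f] assms by (simp add: atLeast0LessThan)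
  also have "(\<Sum>c\<in>{m..<n}. f c) = (\<Sum>c<n - m. f (m + c))"
    using sum.shift_bounds_nat_ivl[of f 0 m "n - m"] assms by (simp add: atLeast0LessThan add.commute)
  finally show ?thesis .
qed

lemma cholesky_blocks:
  fixes L :: "complex mat"
  assumes L: "L \<in> carrier_mat n n" and lt: "lower_triangular L" and m: "m \<le> n"
  defines "R \<equiv> L * mat_adjoint L"
    and "L11 \<equiv> mat m m (\<lambda>(a, b). L $$ (a, b))"
    and "L21 \<equiv> mat (n - m) m (\<lambda>(a, b). L $$ (m + a, b))"
    and "L22 \<equiv> mat (n - m) (n - m) (\<lambda>(a, b). L $$ (m + a, m + b))"
  shows "mat m m (\<lambda>(a, b). R $$ (a, b)) = L11 * mat_adjoint L11"
    and "mat m (n - m) (\<lambda>(a, b). R $$ (a, m + b)) = L11 * mat_adjoint L21"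
    and "mat (n - m) m (\<lambda>(a, b). R $$ (m + a, b)) = L21 * mat_adjoint L11"
    and "mat (n - m) (n - m) (\<lambda>(a, b). R $$ (m + a, m + b)) = L21 * mat_adjoint L21 + L22 * mat_adjoint L22"
proof -
  have R: "R $$ (i, j) = (\<Sum>c<m. L $$ (i, c) * cnj (L $$ (j, c)))
      + (\<Sum>c<n - m. L $$ (i, m + c) * cnj (L $$ (j, m + c)))" if "i < n" "j < n" for i j
  proof -
    have "R $$ (i, j) = (\<Sum>c<n. L $$ (i, c) * cnj (L $$ (j, c)))"
      unfolding R_def using that L by (subst index_mult_mat_adjoint) auto
    then show ?thesis using m by (simp add: sum_lessThan_split)
  qed
  have upper: "L $$ (i, m + c) = 0" if "i < m" "c < n - m" for i c
    using lt L that by (simp add: lower_triangular_def)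
  show "mat m m (\<lambda>(a, b). R $$ (a, b)) = L11 * mat_adjoint L11"
    by (rule eq_matI) (use m in \<open>auto simp: R upper L11_def index_mult_mat_adjoint simp del: index_mult_mat(1)\<close>)
  show "mat m (n - m) (\<lambda>(a, b). R $$ (a, m + b)) = L11 * mat_adjoint L21"
    by (rule eq_matI) (use m in \<open>auto simp: R upper L11_def L21_def index_mult_mat_adjoint simp del: index_mult_mat(1)\<close>)
  show "mat (n - m) m (\<lambda>(a, b). R $$ (m + a, b)) = L21 * mat_adjoint L11"
    by (rule eq_matI) (use m in \<open>auto simp: R upper L11_def L21_def index_mult_mat_adjoint simp del: index_mult_mat(1)\<close>)
  show "mat (n - m) (n - m) (\<lambda>(a, b). R $$ (m + a, m + b)) = L21 * mat_adjoint L21 + L22 * mat_adjoint L22"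
    by (rule eq_matI) (use m in \<open>auto simp: R L21_def L22_def index_mult_mat_adjoint simp del: index_mult_mat(1)\<close>)
qed

lemma schur_compl_cholesky:
  fixes L :: "complex mat"
  assumes L: "L \<in> carrier_mat n n" and lt: "lower_triangular L"
    and dg: "\<forall>i < n. L $$ (i, i) \<noteq> 0" and m: "m \<le> n"
  defines "L22 \<equiv> mat (n - m) (n - m) (\<lambda>(a, b). L $$ (m + a, m + b))"
  shows "schur_compl (L * mat_adjoint L) m = L22 * mat_adjoint L22"
proof -
  define L11 where "L11 = mat m m (\<lambda>(a, b). L $$ (a, b))"
  define L21 where "L21 = mat (n - m) m (\<lambda>(a, b). L $$ (m + a, b))"
  have L11: "L11 \<in> carrier_mat m m" and L21: "L21 \<in> carrier_mat (n - m) m"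
    and L22: "L22 \<in> carrier_mat (n - m) (n - m)"
    by (simp_all add: L11_def L21_def L22_def)
  have "lower_triangular L11" "\<forall>i < m. L11 $$ (i, i) \<noteq> 0"
    using lt L dg m by (auto simp: lower_triangular_def L11_def)
  note det = det_lower_triangular_nonzero[OF L11 this]
  note blocks = cholesky_blocks[OF L lt m, folded L11_def L21_def L22_def]
  have "schur_compl (L * mat_adjoint L) m = (L21 * mat_adjoint L21 + L22 * mat_adjoint L22)
      - L21 * mat_adjoint L11 * inv_mat (L11 * mat_adjoint L11) * (L11 * mat_adjoint L21)"
  proof -
    have dim: "dim_row (L * mat_adjoint L) = n" using L by simp
    show ?thesis unfolding schur_compl_def Let_def dim blocks ..
  qed
  also have "\<dots> = (L21 * mat_adjoint L21 + L22 * mat_adjoint L22) - L21 * mat_adjoint L21"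
    by (simp only: mult_adjoint_inv_mult_adjoint_cancel[OF L11 L21 L21 det])
  also have "\<dots> = L22 * mat_adjoint L22"
    using L21 L22 by (intro eq_matI) simp_all
  finally show ?thesis .
qed

lemma index_mult_mat_adjoint_lower_triangular:
  fixes L :: "complex mat"
  assumes L: "L \<in> carrier_mat n n" and lt: "lower_triangular L" and ba: "b \<le> a" and a: "a < n"
  shows "(L * mat_adjoint L) $$ (a, b) = (\<Sum>c\<le>b. L $$ (a, c) * cnj (L $$ (b, c)))"
proof -
  have "(L * mat_adjoint L) $$ (a, b) = (\<Sum>c<n. L $$ (a, c) * cnj (L $$ (b, c)))"
    using L ba a by (subst index_mult_mat_adjoint) auto
  also have "\<dots> = (\<Sum>c\<le>b. L $$ (a, c) * cnj (L $$ (b, c)))"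
    using L lt ba a by (intro sum.mono_neutral_right) (auto simp: lower_triangular_def)
  finally show ?thesis .
qed

lemma schur_compl_cholesky_index:
  fixes L :: "complex mat"
  assumes L: "L \<in> carrier_mat n n" and lt: "lower_triangular L"
    and dg: "\<forall>i < n. L $$ (i, i) \<noteq> 0" and ba: "b \<le> a" and a: "m + a < n"
  shows "schur_compl (L * mat_adjoint L) m $$ (a, b) =
    (\<Sum>c\<in>{m..m + b}. L $$ (m + a, c) * cnj (L $$ (m + b, c)))"
proof -
  define L22 where "L22 = mat (n - m) (n - m) (\<lambda>(a, b). L $$ (m + a, m + b))"
  have L22: "L22 \<in> carrier_mat (n - m) (n - m)" by (simp add: L22_def)
  have "lower_triangular L22" using lt L by (auto simp: lower_triangular_def L22_def)
  have "schur_compl (L * mat_adjoint L) m $$ (a, b) = (L22 * mat_adjoint L22) $$ (a, b)"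
    using schur_compl_cholesky[OF L lt dg] a by (simp add: L22_def)
  also have "\<dots> = (\<Sum>c\<le>b. L $$ (m + a, m + c) * cnj (L $$ (m + b, m + c)))"
    using index_mult_mat_adjoint_lower_triangular[OF L22 \<open>lower_triangular L22\<close> ba] a ba
    by (simp add: L22_def)
  also have "\<dots> = (\<Sum>c\<in>{m..m + b}. L $$ (m + a, c) * cnj (L $$ (m + b, c)))"
    using sum.shift_bounds_cl_nat_ivl[of "\<lambda>c. L $$ (m + a, c) * cnj (L $$ (m + b, c))" 0 m b]
    by (simp add: atMost_atLeast0 add.commute)
  finally show ?thesis .
qed

lemma schur_compl_cholesky_diag:
  fixes L :: "complex mat"
  assumes "L \<in> carrier_mat n n" "lower_triangular L" "\<forall>i < n. L $$ (i, i) \<noteq> 0" "m + a < n"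
  shows "schur_compl (L * mat_adjoint L) m $$ (a, a) = of_real (\<Sum>c\<in>{m..m + a}. (cmod (L $$ (m + a, c)))\<^sup>2)"
  using schur_compl_cholesky_index[OF assms(1-3) order.refl assms(4)]
  by (simp add: complex_norm_square del: of_real_power)

lemma cholesky_partial_correlation:
  fixes L :: "complex mat"
  assumes L: "L \<in> carrier_mat n n" and lt: "lower_triangular L" and dg: "\<forall>i < n. L $$ (i, i) \<noteq> 0"
    and pivot: "L $$ (m, m) = of_real r" "0 < r"
    and col: "f = 0 \<or> f = 1 \<and> L $$ (m + 1, m) = 0 \<and> L $$ (m + 1, m + 1) = of_real r"
      \<comment> \<open>the second column needs a scalar \<open>2 \<times> 2\<close> pivot block, as in the quaternion case\<close>
    and norm: "(\<Sum>c\<in>{m..i}. (cmod (L $$ (i, c)))\<^sup>2) = Q\<^sup>2" "0 < Q"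
    and mi: "m < i" "i + e < n"
  defines "S \<equiv> schur_compl (L * mat_adjoint L) m"
  shows "S $$ (i - m + e, f) / of_real (sqrt (Re (S $$ (i - m, i - m)) * Re (S $$ (0, 0))))
    = L $$ (i + e, m + f) / of_real Q"
proof -
  have "S $$ (i - m + e, f) = L $$ (i + e, m + f) * of_real r"
    using schur_compl_cholesky_index[OF L lt dg, of f "i - m + e" m] col mi pivot
    by (auto simp: S_def)
  moreover have "S $$ (0, 0) = of_real (r\<^sup>2)"
    using schur_compl_cholesky_index[OF L lt dg, of 0 0 m] mi pivot by (simp add: S_def power2_eq_square)
  moreover have "S $$ (i - m, i - m) = of_real (Q\<^sup>2)"
    using schur_compl_cholesky_diag[OF L lt dg, of m "i - m"] norm mi by (simp add: S_def)
  ultimately show ?thesis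
    using norm(2) pivot by (simp add: real_sqrt_mult)
qed

abbreviation sin_prod :: "(nat \<Rightarrow> real) \<Rightarrow> nat \<Rightarrow> real" where
  "sin_prod t n \<equiv> \<Prod>p\<in>{1..n}. sin (t p)"

definition spherical_coord :: "(nat \<Rightarrow> real) \<Rightarrow> nat \<Rightarrow> real" where
  "spherical_coord t p = cos (t (Suc p)) * sin_prod t p"

lemma sin_prod_Suc: "sin_prod t (Suc n) = sin_prod t n * sin (t (Suc n))"
  by simp

lemma sin_prod_add: "sin_prod t (n + q) = sin_prod t n * (\<Prod>m\<in>{1..q}. sin (t (n + m)))"
  by (induction q) (simp_all add: sin_prod_Suc[of t "n + _", simplified] mult.assoc)

lemma sin_prod_pos:
  assumes "\<forall>p \<in> {1..n}. 0 < t p \<and> t p < pi"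
  shows "0 < sin_prod t n"
  using assms by (intro prod_pos) (auto intro: sin_gt_zero)

lemma sum_spherical_coord_sq:
  assumes "n \<le> M"
  shows "(\<Sum>p\<in>{n..<M}. (spherical_coord t p)\<^sup>2) + (sin_prod t M)\<^sup>2 = (sin_prod t n)\<^sup>2"
  using assms
proof (induction M rule: dec_induct)
  case (step M)
  have "(spherical_coord t M)\<^sup>2 + (sin_prod t (Suc M))\<^sup>2 = (sin_prod t M)\<^sup>2"
    by (simp add: spherical_coord_def power_mult_distrib algebra_simps)
      (metis distrib_right mult_1 sin_cos_squared_add2)
  with step show ?case by (simp add: add.assoc)
qed simp

lemma sum_group_consecutive:
  fixes f :: "nat \<Rightarrow> 'a :: comm_monoid_add"
  shows "(\<Sum>c\<in>{a..<b}. \<Sum>i<g. f (g * c + i)) = (\<Sum>p\<in>{g * a..<g * b}. f p)"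
proof (induction b)
  case (Suc b)
  show ?case
  proof (cases "a \<le> b")
    case True
    have "(\<Sum>i<g. f (g * b + i)) = (\<Sum>p\<in>{g * b..<g * Suc b}. f p)"
      using sum.shift_bounds_nat_ivl[of f 0 "g * b" g] by (simp add: atLeast0LessThan add.commute)
    then show ?thesis
      using Suc True by (simp add: sum.atLeastLessThan_concat mult_le_mono2)
  qed (use mult_le_mono2[of "Suc b" a g] in simp)
qed simp

lemma
  fixes f :: "nat \<Rightarrow> 'a :: comm_monoid_add"
  shows sum_lessThan_2: "(\<Sum>i<2. f i) = f 0 + f 1"
  and sum_lessThan_4: "(\<Sum>i<4. f i) = f 0 + f 1 + f 2 + f 3"
  by (simp_all add: eval_nat_numeral)

lemma complex_spherical_row_norm:
  fixes l :: "nat \<Rightarrow> complex"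
  assumes row: "\<forall>c\<in>{a..<b}. l c = Complex (spherical_coord t (2 * c)) (spherical_coord t (2 * c + 1))"
    and last: "l b = of_real (sin_prod t (2 * b))" and ab: "a \<le> b"
  shows "(\<Sum>c\<in>{a..b}. (cmod (l c))\<^sup>2) = (sin_prod t (2 * a))\<^sup>2"
proof -
  have "(\<Sum>c\<in>{a..<b}. (cmod (l c))\<^sup>2) = (\<Sum>c\<in>{a..<b}. \<Sum>i<2. (spherical_coord t (2 * c + i))\<^sup>2)"
    by (rule sum.cong[OF refl]) (use row in \<open>auto simp: cmod_power2 sum_lessThan_2\<close>)
  also have "\<dots> = (\<Sum>p\<in>{2 * a..<2 * b}. (spherical_coord t p)\<^sup>2)"
    by (rule sum_group_consecutive)
  finally show ?thesis
    using sum_spherical_coord_sq[of "2 * a" "2 * b" t] last ab by (simp add: sum.last_plus del: of_real_prod)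
qed

lemma quaternion_spherical_row_norm:
  fixes l :: "nat \<Rightarrow> complex"
  assumes row: "\<forall>c\<in>{a..<b}.
      l (2 * c) = Complex (spherical_coord t (4 * c)) (spherical_coord t (4 * c + 1)) \<and>
      l (2 * c + 1) = Complex (spherical_coord t (4 * c + 2)) (spherical_coord t (4 * c + 3))"
    and last: "l (2 * b) = of_real (sin_prod t (4 * b))" and ab: "a \<le> b"
  shows "(\<Sum>c\<in>{2 * a..2 * b}. (cmod (l c))\<^sup>2) = (sin_prod t (4 * a))\<^sup>2"
proof -
  have "(\<Sum>c\<in>{2 * a..<2 * b}. (cmod (l c))\<^sup>2) = (\<Sum>c\<in>{a..<b}. \<Sum>i<2. (cmod (l (2 * c + i)))\<^sup>2)"
    by (rule sum_group_consecutive[symmetric])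
  also have "\<dots> = (\<Sum>c\<in>{a..<b}. \<Sum>i<4. (spherical_coord t (4 * c + i))\<^sup>2)"
    by (rule sum.cong[OF refl]) (use row in \<open>auto simp: cmod_power2 sum_lessThan_2 sum_lessThan_4\<close>)
  also have "\<dots> = (\<Sum>p\<in>{4 * a..<4 * b}. (spherical_coord t p)\<^sup>2)"
    by (rule sum_group_consecutive)
  finally show ?thesis
    using sum_spherical_coord_sq[of "4 * a" "4 * b" t] last ab by (simp add: sum.last_plus del: of_real_prod)
qed

lemma complex_correlation_angles:
  fixes R L :: "complex mat" and \<theta> :: "nat \<Rightarrow> nat \<Rightarrow> real"
  assumes L: "L \<in> carrier_mat N N" and lt: "\<forall>i < N. \<forall>j < N. i < j \<longrightarrow> L $$ (i, j) = 0"
   and dpos: "\<forall>i < N. \<exists>r > 0. L $$ (i, i) = complex_of_real r"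
   and RL: "R = L * mat_adjoint L"
   and angles: "\<forall>j \<in> {2..N}. \<forall>p \<in> {1..2 * j - 2}. 0 < \<theta> j p \<and> \<theta> j p < pi"
   and form: "\<forall>j \<in> {2..N}.
        (\<forall>k \<in> {1..j - 1}. L $$ (j - 1, k - 1) =
           (complex_of_real (cos (\<theta> j (2 * k - 1))) +
            \<i> * complex_of_real (cos (\<theta> j (2 * k)) * sin (\<theta> j (2 * k - 1)))) *
           complex_of_real (\<Prod>p \<in> {1..2 * k - 2}. sin (\<theta> j p))) \<and>
        L $$ (j - 1, j - 1) = complex_of_real (\<Prod>p \<in> {1..2 * j - 2}. sin (\<theta> j p))"
   and jk: "1 \<le> k" "k < j" "j \<le> N"
  shows "let S = schur_compl R (k - 1)
    in S $$ (j - k, 0) / complex_of_real (sqrt (Re (S $$ (j - k, j - k)) * Re (S $$ (0, 0))))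
       = complex_of_real (cos (\<theta> j (2 * k - 1))) +
         \<i> * complex_of_real (cos (\<theta> j (2 * k)) * sin (\<theta> j (2 * k - 1)))"
proof -
  obtain j0 k0 where j0: "j = Suc j0" and k0: "k = Suc k0"
    using jk by (cases j; cases k) auto
  define t where "t = \<theta> j"
  define z where "z c = of_real (cos (t (2 * c + 1))) + \<i> * of_real (cos (t (2 * c + 2)) * sin (t (2 * c + 1)))"
    for c
  have j: "j \<in> {2..N}" using jk by simp
  have entry: "L $$ (j0, c) = of_real (sin_prod t (2 * c)) * z c" if "c < j0" for c
    using conjunct1[OF form[rule_format, OF j], rule_format, of "Suc c"] that
    by (simp add: j0 t_def z_def mult.commute del: of_real_prod)
  have row: "\<forall>c < j0. L $$ (j0, c) = Complex (spherical_coord t (2 * c)) (spherical_coord t (2 * c + 1))"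
    by (simp add: entry z_def complex_eq_iff spherical_coord_def del: of_real_prod)
  have diag: "L $$ (j0, j0) = of_real (sin_prod t (2 * j0))"
    using conjunct2[OF form[rule_format, OF j]] by (simp add: j0 t_def del: of_real_prod)
  have "k0 < N" using jk k0 by simp
  then obtain r where r: "L $$ (k0, k0) = of_real r" "0 < r" using dpos by blast
  define Q where "Q = sin_prod t (2 * k0)"
  have "0 < Q" unfolding Q_def using angles j jk by (intro sin_prod_pos) (auto simp: t_def j0 k0)
  have norm: "(\<Sum>c\<in>{k0..j0}. (cmod (L $$ (j0, c)))\<^sup>2) = Q\<^sup>2"
    using complex_spherical_row_norm[of k0 j0 "\<lambda>c. L $$ (j0, c)" t] row diag jk by (simp add: Q_def j0 k0)
  have "lower_triangular L" using L lt by (simp add: lower_triangular_def)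
  moreover have "\<forall>i < N. L $$ (i, i) \<noteq> 0" using dpos by force
  ultimately have "schur_compl R k0 $$ (j0 - k0, 0) /
      of_real (sqrt (Re (schur_compl R k0 $$ (j0 - k0, j0 - k0)) * Re (schur_compl R k0 $$ (0, 0))))
    = L $$ (j0, k0) / of_real Q"
    using cholesky_partial_correlation[OF L _ _ r _ norm \<open>0 < Q\<close>, of 0 0] jk
    by (simp add: RL j0 k0)
  also have "\<dots> = z k0"
    using entry[of k0, folded Q_def] jk \<open>0 < Q\<close> by (simp add: j0 k0)
  finally show ?thesis by (simp add: Let_def j0 k0 t_def z_def)
qed

lemma quat_block_lower_triangular:
  fixes L :: "complex mat"
  assumes Q: "quat_block_form L n"
    and lo: "\<forall>a < n. \<forall>b < n. a < b \<longrightarrow> L $$ (2 * a, 2 * b) = 0 \<and> L $$ (2 * a, 2 * b + 1) = 0"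
    and dg: "\<forall>a < n. (\<exists>r > 0. L $$ (2 * a, 2 * a) = of_real r) \<and> L $$ (2 * a, 2 * a + 1) = 0"
  shows "lower_triangular L" "\<forall>i < 2 * n. L $$ (i, i) \<noteq> 0"
proof -
  have L: "L \<in> carrier_mat (2 * n) (2 * n)"
    and QB: "\<forall>a < n. \<forall>b < n. L $$ (2 * a + 1, 2 * b) = - cnj (L $$ (2 * a, 2 * b + 1)) \<and>
      L $$ (2 * a + 1, 2 * b + 1) = cnj (L $$ (2 * a, 2 * b))"
    using Q by (simp_all add: quat_block_form_def)
  have parity: "i = 2 * (i div 2) \<or> i = 2 * (i div 2) + 1" for i :: nat by presburger
  have "L $$ (i, j) = 0" if "i < 2 * n" "j < 2 * n" "i < j" for i j
  proof -
    define a b where "a = i div 2" and "b = j div 2"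
    have ab: "a < n" "b < n" "a \<le> b" using that by (auto simp: a_def b_def div_le_mono)
    show ?thesis
    proof (cases "a < b")
      case True
      then show ?thesis using parity[of i, folded a_def] parity[of j, folded b_def] lo QB ab by auto
    next
      case False
      then have "i = 2 * a" "j = 2 * a + 1"
        using ab \<open>i < j\<close> parity[of i, folded a_def] parity[of j, folded b_def] by auto
      then show ?thesis using dg ab by auto
    qed
  qed
  then show "lower_triangular L" using L by (simp add: lower_triangular_def)
  show "\<forall>i < 2 * n. L $$ (i, i) \<noteq> 0"
  proof (intro allI impI)
    fix i assume "i < 2 * n"
    then have a: "i div 2 < n" by simp
    then obtain r where "r > 0" "L $$ (2 * (i div 2), 2 * (i div 2)) = of_real r" using dg by blast
    then show "L $$ (i, i) \<noteq> 0" using parity[of i] QB a by (metis complex_cnj_complex_of_real of_real_eq_0_iff order_less_irrefl)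
  qed
qed

lemma cholesky_quaternion_block_correlation:
  fixes L :: "complex mat"
  assumes QL: "quat_block_form L n" and lt: "lower_triangular L" and dg: "\<forall>i < 2 * n. L $$ (i, i) \<noteq> 0"
    and pivot: "L $$ (2 * k, 2 * k) = of_real r" "L $$ (2 * k, 2 * k + 1) = 0" "0 < r"
    and norm: "(\<Sum>c\<in>{2 * k..2 * j}. (cmod (L $$ (2 * j, c)))\<^sup>2) = Q\<^sup>2" "0 < Q"
    and kj: "k < j" "j < n" and ef: "e \<le> 1" "f \<le> 1"
  defines "S \<equiv> schur_compl (L * mat_adjoint L) (2 * k)"
  shows "S $$ (2 * (j - k) + e, f) / of_real (sqrt (Re (S $$ (2 * (j - k), 2 * (j - k))) * Re (S $$ (0, 0))))
    = L $$ (2 * j + e, 2 * k + f) / of_real Q"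
proof -
  have L: "L \<in> carrier_mat (2 * n) (2 * n)"
    and "L $$ (2 * k + 1, 2 * k) = - cnj (L $$ (2 * k, 2 * k + 1))"
      "L $$ (2 * k + 1, 2 * k + 1) = cnj (L $$ (2 * k, 2 * k))"
    using QL kj by (simp_all add: quat_block_form_def)
  then have "f = 0 \<or> f = 1 \<and> L $$ (2 * k + 1, 2 * k) = 0 \<and> L $$ (2 * k + 1, 2 * k + 1) = of_real r"
    using ef pivot by auto
  moreover have "2 * j - 2 * k = 2 * (j - k)" by simp
  ultimately show ?thesis
    using cholesky_partial_correlation[OF L lt dg pivot(1,3) _ norm, of f e] kj ef by (simp add: S_def)
qed

lemma spherical_coord_add:
  "spherical_coord t (n + q) = cos (t (n + q + 1)) * (\<Prod>m\<in>{1..q}. sin (t (n + m))) * sin_prod t n"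
  unfolding spherical_coord_def sin_prod_add by (simp add: ac_simps)

lemma atLeastAtMost_1_2: "{Suc 0..2} = {1, 2 :: nat}"
  and atLeastAtMost_1_3: "{Suc 0..3} = {1, 2, 3 :: nat}"
  by auto

lemma qcoord_spherical:
  assumes "\<forall>s \<in> {1..4}. qcoord L (Suc j) (Suc c) s =
    cos (t (4 * c + s)) * (\<Prod>m\<in>{1..s - 1}. sin (t (4 * c + m))) * sin_prod t (4 * c)"
  shows "L $$ (2 * j, 2 * c) = Complex (spherical_coord t (4 * c)) (spherical_coord t (4 * c + 1))"
    and "L $$ (2 * j, 2 * c + 1) = Complex (spherical_coord t (4 * c + 2)) (spherical_coord t (4 * c + 3))"
    and "L $$ (2 * j, 2 * c) = of_real (sin_prod t (4 * c)) *
      (of_real (cos (t (4 * c + 1))) + \<i> * of_real (cos (t (4 * c + 2)) * sin (t (4 * c + 1))))"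
    and "L $$ (2 * j, 2 * c + 1) = of_real (sin_prod t (4 * c)) *
      ((of_real (cos (t (4 * c + 3))) + \<i> * of_real (cos (t (4 * c + 4)) * sin (t (4 * c + 3)))) *
        of_real (sin (t (4 * c + 1)) * sin (t (4 * c + 2))))"
proof -
  have q: "qcoord L (Suc j) (Suc c) s = spherical_coord t (4 * c + (s - 1))" if "s \<in> {1..4}" for s
    using assms that spherical_coord_add[of t "4 * c" "s - 1"] by auto
  from q[of 1] q[of 2] q[of 3] q[of 4]
  show "L $$ (2 * j, 2 * c) = Complex (spherical_coord t (4 * c)) (spherical_coord t (4 * c + 1))"
    and "L $$ (2 * j, 2 * c + 1) = Complex (spherical_coord t (4 * c + 2)) (spherical_coord t (4 * c + 3))"
    by (simp_all add: qcoord_def complex_eq_iff)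
  from assms[rule_format, of 1] assms[rule_format, of 2] assms[rule_format, of 3] assms[rule_format, of 4]
  show "L $$ (2 * j, 2 * c) = of_real (sin_prod t (4 * c)) *
      (of_real (cos (t (4 * c + 1))) + \<i> * of_real (cos (t (4 * c + 2)) * sin (t (4 * c + 1))))"
    and "L $$ (2 * j, 2 * c + 1) = of_real (sin_prod t (4 * c)) *
      ((of_real (cos (t (4 * c + 3))) + \<i> * of_real (cos (t (4 * c + 4)) * sin (t (4 * c + 3)))) *
        of_real (sin (t (4 * c + 1)) * sin (t (4 * c + 2))))"
    by (simp_all add: qcoord_def complex_eq_iff atLeastAtMost_1_2 atLeastAtMost_1_3 del: of_real_prod)
qed

lemma quaternion_correlation_angles:
  fixes R L :: "complex mat" and \<theta> :: "nat \<Rightarrow> nat \<Rightarrow> real"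
  assumes QL: "quat_block_form L N"
   and lo: "\<forall>a < N. \<forall>b < N. a < b \<longrightarrow> L $$ (2 * a, 2 * b) = 0 \<and> L $$ (2 * a, 2 * b + 1) = 0"
   and dpos: "\<forall>a < N. (\<exists>r > 0. L $$ (2 * a, 2 * a) = complex_of_real r) \<and> L $$ (2 * a, 2 * a + 1) = 0"
   and RL: "R = L * mat_adjoint L"
   and angles: "\<forall>j \<in> {2..N}. \<forall>p \<in> {1..4 * j - 4}. 0 < \<theta> j p \<and> \<theta> j p < pi"
   and form: "\<forall>j \<in> {2..N}.
        (\<forall>k \<in> {1..j - 1}. \<forall>s \<in> {1..4}. qcoord L j k s =
           cos (\<theta> j (4 * (k - 1) + s)) *
           (\<Prod>m \<in> {1..s - 1}. sin (\<theta> j (4 * (k - 1) + m))) *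
           (\<Prod>p \<in> {1..4 * (k - 1)}. sin (\<theta> j p))) \<and>
        L $$ (2 * (j - 1), 2 * (j - 1)) = complex_of_real (\<Prod>p \<in> {1..4 * (j - 1)}. sin (\<theta> j p))"
   and jk: "1 \<le> k" "k < j" "j \<le> N"
  shows "let S = schur_compl R (2 * (k - 1));
              d = complex_of_real (sqrt (Re (S $$ (2 * (j - k), 2 * (j - k))) * Re (S $$ (0, 0))));
              z = complex_of_real (cos (\<theta> j (4 * k - 3))) +
                  \<i> * complex_of_real (cos (\<theta> j (4 * k - 2)) * sin (\<theta> j (4 * k - 3)));
              w = (complex_of_real (cos (\<theta> j (4 * k - 1))) +
                   \<i> * complex_of_real (cos (\<theta> j (4 * k)) * sin (\<theta> j (4 * k - 1)))) *
                  complex_of_real (sin (\<theta> j (4 * k - 3)) * sin (\<theta> j (4 * k - 2)))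
          in S $$ (2 * (j - k), 0) / d = z \<and>
             S $$ (2 * (j - k), 1) / d = w \<and>
             S $$ (2 * (j - k) + 1, 0) / d = - cnj w \<and>
             S $$ (2 * (j - k) + 1, 1) / d = cnj z"
proof -
  obtain j0 k0 where j0: "j = Suc j0" and k0: "k = Suc k0"
    using jk by (cases j; cases k) auto
  define t where "t = \<theta> j"
  have j: "j \<in> {2..N}" and kj: "k0 < j0" "j0 < N" using jk by (auto simp: j0 k0)
  have qc: "\<forall>s \<in> {1..4}. qcoord L (Suc j0) (Suc c) s =
      cos (t (4 * c + s)) * (\<Prod>m\<in>{1..s - 1}. sin (t (4 * c + m))) * sin_prod t (4 * c)"
    if "c < j0" for c
    using conjunct1[OF form[rule_format, OF j], rule_format, of "Suc c"] that by (simp add: j0 t_def)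
  have diag: "L $$ (2 * j0, 2 * j0) = of_real (sin_prod t (4 * j0))"
    using conjunct2[OF form[rule_format, OF j]] by (simp add: j0 t_def del: of_real_prod)
  obtain r where r: "L $$ (2 * k0, 2 * k0) = of_real r" "L $$ (2 * k0, 2 * k0 + 1) = 0" "0 < r"
    using dpos kj by (meson order.strict_trans)
  define Q where "Q = sin_prod t (4 * k0)"
  have "0 < Q" unfolding Q_def using angles j jk by (intro sin_prod_pos) (auto simp: t_def j0 k0)
  have norm: "(\<Sum>c\<in>{2 * k0..2 * j0}. (cmod (L $$ (2 * j0, c)))\<^sup>2) = Q\<^sup>2"
    using quaternion_spherical_row_norm[of k0 j0 "\<lambda>c. L $$ (2 * j0, c)" t] qcoord_spherical(1,2)[OF qc] diag kj
    by (simp add: Q_def)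
  note lt = quat_block_lower_triangular[OF QL lo dpos]
  note corr = cholesky_quaternion_block_correlation[OF QL lt r norm \<open>0 < Q\<close> kj, folded RL]
  note zw = qcoord_spherical(3,4)[OF qc[OF kj(1)], folded Q_def]
  have "L $$ (2 * j0 + 1, 2 * k0) = - cnj (L $$ (2 * j0, 2 * k0 + 1))"
    "L $$ (2 * j0 + 1, 2 * k0 + 1) = cnj (L $$ (2 * j0, 2 * k0))"
    using QL kj by (simp_all add: quat_block_form_def)
  moreover have idx: "2 * (k - 1) = 2 * k0" "j - k = j0 - k0" "4 * k - 3 = 4 * k0 + 1"
    "4 * k - 2 = 4 * k0 + 2" "4 * k - 1 = 4 * k0 + 3" "4 * k = 4 * k0 + 4"
    by (simp_all add: j0 k0)
  ultimately show ?thesis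
    using corr[of 0 0] corr[of 0 1] corr[of 1 0] corr[of 1 1] zw \<open>0 < Q\<close>
    unfolding Let_def idx t_def[symmetric] by (simp add: add.commute)
qed

theorem mainTheorem7:
  fixes N :: nat
  assumes "N \<ge> 2"
  shows
  \<comment> \<open>complex case\<close>
  "(\<forall>(R :: complex mat) (L :: complex mat) (\<theta> :: nat \<Rightarrow> nat \<Rightarrow> real).
     R \<in> carrier_mat N N \<and> pos_def_mat R \<and> (\<forall>i < N. R $$ (i, i) = 1) \<and>
     L \<in> carrier_mat N N \<and> (\<forall>i < N. \<forall>j < N. i < j \<longrightarrow> L $$ (i, j) = 0) \<and>
     (\<forall>i < N. \<exists>r > 0. L $$ (i, i) = complex_of_real r) \<and>
     R = L * mat_adjoint L \<and>
     (\<forall>j \<in> {2..N}. \<forall>p \<in> {1..2 * j - 2}. 0 < \<theta> j p \<and> \<theta> j p < pi) \<and>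
     (\<forall>j \<in> {2..N}.
        (\<forall>k \<in> {1..j - 1}. L $$ (j - 1, k - 1) =
           (complex_of_real (cos (\<theta> j (2 * k - 1))) +
            \<i> * complex_of_real (cos (\<theta> j (2 * k)) * sin (\<theta> j (2 * k - 1)))) *
           complex_of_real (\<Prod>p \<in> {1..2 * k - 2}. sin (\<theta> j p))) \<and>
        L $$ (j - 1, j - 1) = complex_of_real (\<Prod>p \<in> {1..2 * j - 2}. sin (\<theta> j p)))
   \<longrightarrow> (\<forall>j k. 1 \<le> k \<and> k < j \<and> j \<le> N \<longrightarrow>
         (let S = schur_compl R (k - 1)
          in S $$ (j - k, 0) /
               complex_of_real (sqrt (Re (S $$ (j - k, j - k)) * Re (S $$ (0, 0))))
             = complex_of_real (cos (\<theta> j (2 * k - 1))) +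
               \<i> * complex_of_real (cos (\<theta> j (2 * k)) * sin (\<theta> j (2 * k - 1))))))
  \<and>
  \<comment> \<open>quaternion case\<close>
  (\<forall>(R :: complex mat) (L :: complex mat) (\<theta> :: nat \<Rightarrow> nat \<Rightarrow> real).
     quat_block_form R N \<and> pos_def_mat R \<and>
     (\<forall>a < N. R $$ (2 * a, 2 * a) = 1 \<and> R $$ (2 * a, 2 * a + 1) = 0) \<and>
     quat_block_form L N \<and>
     (\<forall>a < N. \<forall>b < N. a < b \<longrightarrow> L $$ (2 * a, 2 * b) = 0 \<and> L $$ (2 * a, 2 * b + 1) = 0) \<and>
     (\<forall>a < N. (\<exists>r > 0. L $$ (2 * a, 2 * a) = complex_of_real r) \<and> L $$ (2 * a, 2 * a + 1) = 0) \<and>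
     R = L * mat_adjoint L \<and>
     (\<forall>j \<in> {2..N}. \<forall>p \<in> {1..4 * j - 4}. 0 < \<theta> j p \<and> \<theta> j p < pi) \<and>
     (\<forall>j \<in> {2..N}.
        (\<forall>k \<in> {1..j - 1}. \<forall>s \<in> {1..4}. qcoord L j k s =
           cos (\<theta> j (4 * (k - 1) + s)) *
           (\<Prod>m \<in> {1..s - 1}. sin (\<theta> j (4 * (k - 1) + m))) *
           (\<Prod>p \<in> {1..4 * (k - 1)}. sin (\<theta> j p))) \<and>
        L $$ (2 * (j - 1), 2 * (j - 1)) = complex_of_real (\<Prod>p \<in> {1..4 * (j - 1)}. sin (\<theta> j p)))
   \<longrightarrow> (\<forall>j k. 1 \<le> k \<and> k < j \<and> j \<le> N \<longrightarrow>
         (let S = schur_compl R (2 * (k - 1));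
              d = complex_of_real (sqrt (Re (S $$ (2 * (j - k), 2 * (j - k))) * Re (S $$ (0, 0))));
              z = complex_of_real (cos (\<theta> j (4 * k - 3))) +
                  \<i> * complex_of_real (cos (\<theta> j (4 * k - 2)) * sin (\<theta> j (4 * k - 3)));
              w = (complex_of_real (cos (\<theta> j (4 * k - 1))) +
                   \<i> * complex_of_real (cos (\<theta> j (4 * k)) * sin (\<theta> j (4 * k - 1)))) *
                  complex_of_real (sin (\<theta> j (4 * k - 3)) * sin (\<theta> j (4 * k - 2)))
          in S $$ (2 * (j - k), 0) / d = z \<and>
             S $$ (2 * (j - k), 1) / d = w \<and>
             S $$ (2 * (j - k) + 1, 0) / d = - cnj w \<and>
             S $$ (2 * (j - k) + 1, 1) / d = cnj z)))"
  \<comment> \<open>positive definiteness and the unit diagonal of \<open>R\<close> follow from the other hypotheses\<close>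
  by (intro conjI allI impI; elim conjE;
      rule complex_correlation_angles quaternion_correlation_angles; assumption)

end
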